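(* Let $q\in\mathbb{C}$ with $|q|<1$, let $n$ be a positive integer and $m\ge0$ an integer. Then for every $x\in[0,1]$, $$[n]_q^m\,\mathbb{B}_{n,q}(x^m\mid x)=\sum_{k=0}^n\binom{n}{k}_q x^k\,[k]_q!\,q^{\binom{k}{2}}S(m,k:q).$$
   Context: For a number $x$, $[x]_q=\frac{1-q^x}{1-q}$; $[n]_q!=[n]_q\cdots[1]_q$, $[0]_q!=1$; $\binom{n}{k}_q=\frac{[n]_q!}{[k]_q![n-k]_q!}$ for $0\le k\le n$ and $0$ for $k>n$; $\binom{j}{2}=j(j-1)/2$. $(1-b)_q^n=\prod_{i=1}^n(1-bq^{i-1})$. For integers $k,n\ge0$, $B_{k,n}(x,q)=\binom{n}{k}_q x^k(1-x)_q^{n-k}$ if $n\ge k$ and $0$ otherwise. For $f\in C[0,1]$, $\mathbb{B}_{n,q}(f\mid x)=\sum_{k=0}^n B_{k,n}(x,q)f\!\left(\frac{[k]_q}{[n]_q}\right)$; here $f(t)=t^m$. The $q$-Stirling numbers of the second kind $S(m,k:q)$ are defined by $\frac{q^{-\binom{k}{2}}}{[k]_q!}\sum_{j=0}^k(-1)^{k-j}\binom{k}{j}_q q^{\binom{k-j}{2}}e^{[j]_q t}=\sum_{m=0}^\infty S(m,k:q)\frac{t^m}{m!}$, i.e. $S(m,k:q)=\frac{q^{-\binom{k}{2}}}{[k]_q!}\sum_{j=0}^k(-1)^{k-j}q^{\binom{k-j}{2}}\binom{k}{j}_q[j]_q^m$ (with $[0]_q^0=1$). *)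

theory Defs
  imports "HOL-Analysis.Analysis"
begin

definition qint :: "complex \<Rightarrow> nat \<Rightarrow> complex" where
  "qint q n = (1 - q ^ n) / (1 - q)"

definition qfact :: "complex \<Rightarrow> nat \<Rightarrow> complex" where
  "qfact q n = (\<Prod>i=1..n. qint q i)"

definition qbinom :: "complex \<Rightarrow> nat \<Rightarrow> nat \<Rightarrow> complex" where
  "qbinom q n k = (if k \<le> n then qfact q n / (qfact q k * qfact q (n - k)) else 0)"

text \<open>(1 - b)_q^n = prod_{i=1}^n (1 - b q^(i-1))\<close>
definition qpoch :: "complex \<Rightarrow> complex \<Rightarrow> nat \<Rightarrow> complex" where
  "qpoch q b n = (\<Prod>i=1..n. (1 - b * q ^ (i - 1)))"

definition qBernstein_basis :: "nat \<Rightarrow> nat \<Rightarrow> complex \<Rightarrow> complex \<Rightarrow> complex" where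
  "qBernstein_basis k n x q = (if k \<le> n then qbinom q n k * x ^ k * qpoch q x (n - k) else 0)"

definition qBernstein :: "nat \<Rightarrow> complex \<Rightarrow> (complex \<Rightarrow> complex) \<Rightarrow> complex \<Rightarrow> complex" where
  "qBernstein n q f x = (\<Sum>k=0..n. qBernstein_basis k n x q * f (qint q k / qint q n))"

definition qStirling2 :: "nat \<Rightarrow> nat \<Rightarrow> complex \<Rightarrow> complex" where
  "qStirling2 m k q = inverse (q ^ (k choose 2)) / qfact q k *
     (\<Sum>j=0..k. (-1) ^ (k - j) * q ^ ((k - j) choose 2) * qbinom q k j * qint q j ^ m)"

end

theory Submission
  imports Defs
begin

text \<open>Expand the factor \<open>(1 - x)_q^(n-j)\<close> of each basis polynomial by the Cauchy
  \<open>q\<close>-binomial theorem and regroup by powers of \<open>x\<close>. Since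
  \<open>[n,k]_q [k,j]_q = [n,j]_q [n-j,k-j]_q\<close>, the coefficient of \<open>[n,k]_q x^k\<close> in
  \<open>\<Sum>_j B_{j,n}(x) g(j)\<close> is the \<open>k\<close>-th \<open>q\<close>-difference
  \<open>\<Sum>_j (-1)^(k-j) q^((k-j) choose 2) [k,j]_q g(j)\<close>. For \<open>g(j) = [j]_q^m\<close> this is
  \<open>[k]_q! q^(k choose 2) S(m,k:q)\<close> by the explicit formula for the \<open>q\<close>-Stirling numbers.\<close>

lemma sum_triangle_swap:
  fixes f :: "nat \<Rightarrow> nat \<Rightarrow> 'a::comm_monoid_add"
  shows "(\<Sum>k=0..n. \<Sum>j=0..k. f k j) = (\<Sum>j=0..n. \<Sum>k=j..n. f k j)"
proof -
  have "(\<Sum>k=0..n. \<Sum>j=0..k. f k j) = (\<Sum>k\<in>{0..n}. \<Sum>j\<in>{j\<in>{0..n}. j \<le> k}. f k j)"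
    by (intro sum.cong) auto
  also have "\<dots> = (\<Sum>j\<in>{0..n}. \<Sum>k\<in>{k\<in>{0..n}. j \<le> k}. f k j)"
    by (rule sum.swap_restrict) simp_all
  also have "\<dots> = (\<Sum>j=0..n. \<Sum>k=j..n. f k j)"
    by (intro sum.cong) auto
  finally show ?thesis .
qed

lemma qfact_0 [simp]: "qfact q 0 = 1"
  by (simp add: qfact_def)

lemma qfact_Suc: "qfact q (Suc n) = qfact q n * qint q (Suc n)"
  by (simp add: qfact_def)

lemma qbinom_above [simp]: "r < k \<Longrightarrow> qbinom q r k = 0"
  by (simp add: qbinom_def)

definition qforward_diff :: "complex \<Rightarrow> nat \<Rightarrow> (nat \<Rightarrow> complex) \<Rightarrow> complex" where
  "qforward_diff q k g = (\<Sum>j=0..k. (-1) ^ (k - j) * q ^ ((k - j) choose 2) * qbinom q k j * g j)"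

lemma qint_0_left: "n \<ge> 1 \<Longrightarrow> qint 0 n = 1"
  by (simp add: qint_def)

lemma qbinom_0_left: "j \<le> k \<Longrightarrow> qbinom 0 k j = 1"
  by (simp add: qbinom_def qfact_def qint_0_left)

lemma qforward_diff_0_left:
  assumes "k \<ge> 1"
  shows "qforward_diff 0 k g = g k - g (k - 1)"
proof -
  define t where "t j = (-1) ^ (k - j) * 0 ^ ((k - j) choose 2) * qbinom 0 k j * g j" for j
  have "qforward_diff 0 k g = sum t {0..k}"
    by (simp add: qforward_diff_def t_def)
  also have "\<dots> = sum t {k - 1, k}"
  proof (rule sum.mono_neutral_right)
    show "\<forall>j\<in>{0..k} - {k - 1, k}. t j = 0"
      by (auto simp: t_def zero_less_binomial_iff)
  qed (use assms in auto)
  also have "\<dots> = g k - g (k - 1)"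
    using assms by (simp add: t_def qbinom_0_left numeral_2_eq_2)
  finally show ?thesis .
qed

context
  fixes q :: complex
  assumes q: "norm q < 1"
begin

lemma qint_nonzero: "n \<ge> 1 \<Longrightarrow> qint q n \<noteq> 0"
proof -
  assume "n \<ge> 1"
  then have "norm (q ^ n) < 1"
    using q by (simp add: norm_power power_less_one_iff)
  moreover have "norm q \<noteq> 1" using q by simp
  ultimately show "qint q n \<noteq> 0"
    by (auto simp: qint_def)
qed

lemma qfact_nonzero: "qfact q n \<noteq> 0"
  by (simp add: qfact_def qint_nonzero)

lemma qint_add: "qint q (m + l) = qint q l + q ^ l * qint q m"
proof -
  have "1 - q \<noteq> 0" using q by auto
  then show ?thesis by (simp add: qint_def field_simps power_add)
qed

lemma qbinom_0 [simp]: "qbinom q r 0 = 1"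
  by (simp add: qbinom_def qfact_nonzero)

lemma qbinom_self [simp]: "qbinom q r r = 1"
  by (simp add: qbinom_def qfact_nonzero)

lemma qbinom_Suc_Suc:
  "qbinom q (Suc r) (Suc i) = qbinom q r (Suc i) + q ^ (r - i) * qbinom q r i"
proof (cases "i < r")
  case True
  then obtain b where r: "r = i + Suc b"
    using less_imp_Suc_add by auto
  have "qint q (Suc r) = qint q (Suc b) + q ^ Suc b * qint q (Suc i)"
    using qint_add[of "Suc i" "Suc b"] r by simp
  moreover have "qfact q i \<noteq> 0" "qfact q b \<noteq> 0" "qint q (Suc i) \<noteq> 0" "qint q (Suc b) \<noteq> 0"
    by (simp_all add: qfact_nonzero qint_nonzero)
  ultimately show ?thesis
    by (simp add: qbinom_def qfact_Suc r Suc_diff_le field_simps del: add_Suc_right)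
next
  case False
  then show ?thesis by (cases "i = r") simp_all
qed

lemma qbinom_mult_qbinom:
  assumes "j \<le> k" "k \<le> n"
  shows "qbinom q n k * qbinom q k j = qbinom q n j * qbinom q (n - j) (k - j)"
  using assms by (simp add: qbinom_def qfact_nonzero field_simps)

lemma qpoch_eq_qbinomial_sum:
  "qpoch q x r = (\<Sum>i=0..r. qbinom q r i * (-x) ^ i * q ^ (i choose 2))"
proof (induction r)
  case 0
  then show ?case by (simp add: qpoch_def numeral_2_eq_2)
next
  case (Suc r)
  define t where "t i = qbinom q r i * (-x) ^ i * q ^ (i choose 2)" for i
  have choose_Suc: "Suc i choose 2 = (i choose 2) + i" for i
    by (simp add: numeral_2_eq_2)
  have shifted: "(\<Sum>i=0..r. qbinom q r (Suc i) * (-x) ^ Suc i * q ^ (Suc i choose 2))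
      = (\<Sum>i=0..r. t i) - 1"
    using sum.atMost_Suc_shift[of t r] by (simp add: atLeast0AtMost t_def numeral_2_eq_2)
  have lowered: "(\<Sum>i=0..r. q ^ (r - i) * qbinom q r i * (-x) ^ Suc i * q ^ (Suc i choose 2))
      = - x * q ^ r * (\<Sum>i=0..r. t i)"
    unfolding sum_distrib_left
  proof (rule sum.cong)
    fix i assume "i \<in> {0..r}"
    then have "q ^ (r - i) * q ^ i = q ^ r" by (simp flip: power_add)
    then show "q ^ (r - i) * qbinom q r i * (-x) ^ Suc i * q ^ (Suc i choose 2) = - x * q ^ r * t i"
      by (simp add: t_def choose_Suc power_add algebra_simps)
  qed simp
  have "(\<Sum>i=0..Suc r. qbinom q (Suc r) i * (-x) ^ i * q ^ (i choose 2))
      = 1 + (\<Sum>i=0..r. qbinom q (Suc r) (Suc i) * (-x) ^ Suc i * q ^ (Suc i choose 2))"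
    unfolding atLeast0AtMost sum.atMost_Suc_shift by (simp add: numeral_2_eq_2)
  also have "\<dots> = 1 + (\<Sum>i=0..r. qbinom q r (Suc i) * (-x) ^ Suc i * q ^ (Suc i choose 2))
      + (\<Sum>i=0..r. q ^ (r - i) * qbinom q r i * (-x) ^ Suc i * q ^ (Suc i choose 2))"
    unfolding qbinom_Suc_Suc distrib_right sum.distrib by (simp only: add.assoc)
  also have "\<dots> = (\<Sum>i=0..r. t i) * (1 - x * q ^ r)"
    unfolding shifted lowered by (simp add: algebra_simps)
  finally show ?case
    using Suc by (simp add: qpoch_def t_def)
qed

lemma sum_qBernstein_basis_monomial_expansion:
  "(\<Sum>j=0..n. qBernstein_basis j n x q * g j)
     = (\<Sum>k=0..n. qbinom q n k * x ^ k * qforward_diff q k g)"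
proof -
  have inner: "(\<Sum>k=j..n. qbinom q n k * x ^ k * ((-1) ^ (k - j) * q ^ ((k - j) choose 2) * qbinom q k j * g j))
      = qBernstein_basis j n x q * g j" if "j \<le> n" for j
  proof -
    have "(\<Sum>k=j..n. qbinom q n k * x ^ k * ((-1) ^ (k - j) * q ^ ((k - j) choose 2) * qbinom q k j * g j))
        = (\<Sum>i=0..n-j. qbinom q n (j + i) * qbinom q (j + i) j * x ^ (j + i) * (-1) ^ i * q ^ (i choose 2) * g j)"
      using that by (subst sum.atLeastAtMost_shift_0) (simp_all add: mult_ac)
    also have "\<dots> = (\<Sum>i=0..n-j. qbinom q n j * x ^ j * g j * (qbinom q (n - j) i * (-x) ^ i * q ^ (i choose 2)))"
    proof (rule sum.cong)
      fix i assume "i \<in> {0..n-j}"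
      then have "qbinom q n (j + i) * qbinom q (j + i) j = qbinom q n j * qbinom q (n - j) i"
        using that qbinom_mult_qbinom[of j "j + i" n] by simp
      moreover have "(-x) ^ i = (-1) ^ i * x ^ i"
        by (rule power_minus)
      ultimately show "qbinom q n (j + i) * qbinom q (j + i) j * x ^ (j + i) * (-1) ^ i * q ^ (i choose 2) * g j
          = qbinom q n j * x ^ j * g j * (qbinom q (n - j) i * (-x) ^ i * q ^ (i choose 2))"
        by (simp add: power_add)
    qed simp
    also have "\<dots> = qbinom q n j * x ^ j * g j * qpoch q x (n - j)"
      by (simp add: qpoch_eq_qbinomial_sum sum_distrib_left)
    also have "\<dots> = qBernstein_basis j n x q * g j"
      using that by (simp add: qBernstein_basis_def mult_ac)
    finally show ?thesis .
  qed
  have "(\<Sum>k=0..n. qbinom q n k * x ^ k * qforward_diff q k g)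
      = (\<Sum>k=0..n. \<Sum>j=0..k. qbinom q n k * x ^ k * ((-1) ^ (k - j) * q ^ ((k - j) choose 2) * qbinom q k j * g j))"
    by (simp add: qforward_diff_def sum_distrib_left)
  also have "\<dots> = (\<Sum>j=0..n. qBernstein_basis j n x q * g j)"
    by (simp add: sum_triangle_swap inner)
  finally show ?thesis ..
qed

text \<open>For \<open>q = 0\<close> and \<open>k \<ge> 2\<close> the definition of \<open>qStirling2\<close> divides by \<open>0\<close>, but
  then both sides vanish.\<close>
lemma qStirling2_eq_qforward_diff:
  "qfact q k * q ^ (k choose 2) * qStirling2 m k q = qforward_diff q k (\<lambda>j. qint q j ^ m)"
proof (cases "q = 0 \<and> k \<ge> 2")
  case True
  then have "qforward_diff q k (\<lambda>j. qint q j ^ m) = 0"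
    using qint_0_left[of k] qint_0_left[of "k - 1"] by (simp add: qforward_diff_0_left le_diff_conv2)
  moreover have "q ^ (k choose 2) = 0"
    using True by (simp add: zero_less_binomial_iff)
  ultimately show ?thesis by simp
next
  case False
  then have "q ^ (k choose 2) \<noteq> 0"
    by (auto simp: not_le numeral_2_eq_2 less_Suc_eq)
  then show ?thesis
    by (simp add: qStirling2_def qforward_diff_def qfact_nonzero)
qed

end

text \<open>The identity is polynomial in \<open>x\<close>.\<close>
theorem corollary4:
  fixes q :: complex and n m :: nat and x :: real
  assumes "norm q < 1" and "n \<ge> 1" and "x \<in> {0..1}"
  shows "qint q n ^ m * qBernstein n q (\<lambda>t. t ^ m) (complex_of_real x)
       = (\<Sum>k=0..n. qbinom q n k * complex_of_real x ^ k * qfact q k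
              * q ^ (k choose 2) * qStirling2 m k q)"
proof -
  define y where "y = complex_of_real x"
  have "qint q n ^ m * qBernstein n q (\<lambda>t. t ^ m) y
      = (\<Sum>j=0..n. qBernstein_basis j n y q * qint q j ^ m)"
    using qint_nonzero[OF assms(1,2)] by (simp add: qBernstein_def sum_distrib_left power_divide)
  also have "\<dots> = (\<Sum>k=0..n. qbinom q n k * y ^ k * qforward_diff q k (\<lambda>j. qint q j ^ m))"
    by (rule sum_qBernstein_basis_monomial_expansion[OF assms(1)])
  also have "\<dots> = (\<Sum>k=0..n. qbinom q n k * y ^ k * qfact q k * q ^ (k choose 2) * qStirling2 m k q)"
    using qStirling2_eq_qforward_diff[OF assms(1)] by (simp add: mult.assoc)
  finally show ?thesis
    unfolding y_def .
qed

end
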